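(* Let $G$ be a group and $L,R$ nonempty subsets of $G$ such that $\mathcal{W}(L)$ and $\mathcal{W}(R)$ are subgroups of $G$. In $2\mathrm{S}(G;L,R)$, if $g=w_{L^{-1},a}\,w_{R,n}$ for integers $a,n\ge 0$, then for every $l\in L$ and every $r\in R$, $g$ is strongly connected to $l^d$ and to $r^d$, where $d=n-a$.
   Context: For nonempty subsets $L,R$ of a group $G$, the two-sided group digraph $2\mathrm{S}(G;L,R)$ has vertex set $G$ and a directed arc $(g,h)$ if and only if $h=l^{-1}gr$ for some $l\in L$, $r\in R$. For a nonempty subset $S$, $w_{S,n}$ denotes the element given by some word $s_1\cdots s_n$ with $s_i\in S$ (length $0$ giving $e$), and $\mathcal{W}(S)$ is the set of elements given by words in $S$ of positive length. Vertex $g$ is strongly connected to $h$ if there are directed paths from $g$ to $h$ and from $h$ to $g$. *)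

theory Defs
  imports "HOL-Algebra.Group"
begin

definition word_prod :: "('a, 'b) monoid_scheme \<Rightarrow> 'a list \<Rightarrow> 'a" where
  "word_prod G xs = foldr (\<lambda>x y. x \<otimes>\<^bsub>G\<^esub> y) xs \<one>\<^bsub>G\<^esub>"

(* set of all possible values of w_{S,n}: elements given by words of length n in S *)
definition words_len :: "('a, 'b) monoid_scheme \<Rightarrow> 'a set \<Rightarrow> nat \<Rightarrow> 'a set" where
  "words_len G S n = {word_prod G xs | xs. length xs = n \<and> set xs \<subseteq> S}"

definition W :: "('a, 'b) monoid_scheme \<Rightarrow> 'a set \<Rightarrow> 'a set" where
  "W G S = (\<Union>n\<in>{1..}. words_len G S n)"

definition inv_set :: "('a, 'b) monoid_scheme \<Rightarrow> 'a set \<Rightarrow> 'a set" where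
  "inv_set G S = (\<lambda>s. inv\<^bsub>G\<^esub> s) ` S"

definition two_sided_arcs :: "('a, 'b) monoid_scheme \<Rightarrow> 'a set \<Rightarrow> 'a set \<Rightarrow> ('a \<times> 'a) set" where
  "two_sided_arcs G L R = {(g, h). g \<in> carrier G \<and> h \<in> carrier G \<and>
      (\<exists>l\<in>L. \<exists>r\<in>R. h = inv\<^bsub>G\<^esub> l \<otimes>\<^bsub>G\<^esub> g \<otimes>\<^bsub>G\<^esub> r)}"

definition strongly_connected ::
  "('a, 'b) monoid_scheme \<Rightarrow> 'a set \<Rightarrow> 'a set \<Rightarrow> 'a \<Rightarrow> 'a \<Rightarrow> bool" where
  "strongly_connected G L R g h \<longleftrightarrow>
     (g, h) \<in> (two_sided_arcs G L R)\<^sup>* \<and> (h, g) \<in> (two_sided_arcs G L R)\<^sup>*"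

end

theory Submission
  imports Defs
begin

text \<open>Following a word \<open>l\<^sub>1\<cdots>l\<^sub>k\<close> in \<open>L\<close> and a word \<open>r\<^sub>1\<cdots>r\<^sub>k\<close> in \<open>R\<close> of the same length
  letter by letter gives a walk from \<open>x\<close> to \<open>\<lambda>\<inverse> x \<rho>\<close>, where \<open>\<lambda>\<close>, \<open>\<rho>\<close> are the two products.
  Since \<open>W(L)\<close> and \<open>W(R)\<close> are groups, \<open>l\<inverse>\<close> and \<open>r\<inverse>\<close> are again products of words, and
  padding with words representing \<open>e\<close> equalises their lengths; so every arc can be reversed
  and strong connectivity coincides with reachability. Writing \<open>g = \<lambda>\<inverse> v\<close> with \<open>\<lambda>\<close> a word
  of length \<open>a\<close> in \<open>L\<close> and \<open>v\<close> of length \<open>n\<close> in \<open>R\<close>, for \<open>d = n - a \<ge> 0\<close> the pair of words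
  \<open>(l\<^sup>d\<lambda>, v)\<close> leads from \<open>l\<^sup>d\<close> to \<open>g\<close> and \<open>(l\<^sup>d, r\<^sup>d)\<close> from \<open>l\<^sup>d\<close> to \<open>r\<^sup>d\<close>; for \<open>d < 0\<close> the
  words \<open>(\<lambda>, r\<^sup>-\<^sup>d v)\<close> and \<open>(l\<^sup>-\<^sup>d, r\<^sup>-\<^sup>d)\<close> start at \<open>r\<^sup>d\<close> instead.\<close>

lemma strongly_connected_iff_reach:
  assumes "sym ((two_sided_arcs G L R)\<^sup>*)"
  shows "strongly_connected G L R x y \<longleftrightarrow> (x, y) \<in> (two_sided_arcs G L R)\<^sup>*"
  using assms unfolding strongly_connected_def sym_def by blast

context group
begin

lemma word_prod_closed: "set xs \<subseteq> carrier G \<Longrightarrow> word_prod G xs \<in> carrier G"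
  by (induction xs) (auto simp: word_prod_def)

lemma word_prod_append:
  "set xs \<subseteq> carrier G \<Longrightarrow> set ys \<subseteq> carrier G \<Longrightarrow>
   word_prod G (xs @ ys) = word_prod G xs \<otimes> word_prod G ys"
  by (induction xs) (auto simp: word_prod_def m_assoc word_prod_closed[unfolded word_prod_def])

lemma words_len_closed: "S \<subseteq> carrier G \<Longrightarrow> x \<in> words_len G S k \<Longrightarrow> x \<in> carrier G"
  unfolding words_len_def using word_prod_closed by blast

lemma one_in_words_len_0: "\<one> \<in> words_len G S 0"
  unfolding words_len_def word_prod_def by auto

lemma words_len_singleton: "S \<subseteq> carrier G \<Longrightarrow> s \<in> S \<Longrightarrow> s \<in> words_len G S 1"
  unfolding words_len_def word_prod_def by (intro CollectI exI[of _ "[s]"]) auto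

lemma words_len_mult:
  assumes "S \<subseteq> carrier G" "x \<in> words_len G S i" "y \<in> words_len G S j"
  shows "x \<otimes> y \<in> words_len G S (i + j)"
proof -
  obtain xs ys where "x = word_prod G xs" "length xs = i" "set xs \<subseteq> S"
    and "y = word_prod G ys" "length ys = j" "set ys \<subseteq> S"
    using assms(2,3) unfolding words_len_def by blast
  with assms(1) show ?thesis
    unfolding words_len_def by (intro CollectI exI[of _ "xs @ ys"]) (auto simp: word_prod_append)
qed

lemma nat_pow_in_words_len: "S \<subseteq> carrier G \<Longrightarrow> s \<in> S \<Longrightarrow> s [^] (k::nat) \<in> words_len G S k"
proof (induction k)
  case 0
  then show ?case using one_in_words_len_0 by simp
next
  case (Suc k)
  then show ?case using words_len_mult[OF _ _ words_len_singleton] by simp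
qed

lemma words_len_pad:
  assumes "S \<subseteq> carrier G" "x \<in> words_len G S i" "\<one> \<in> words_len G S m"
  shows "x \<in> words_len G S (i + c * m)"
proof (induction c)
  case 0
  then show ?case using assms(2) by simp
next
  case (Suc c)
  have "x \<in> carrier G" using assms(1,2) by (rule words_len_closed)
  with words_len_mult[OF assms(1) Suc assms(3)] show ?case by (simp add: ac_simps)
qed

lemma inv_in_words_len_of_inv_set:
  assumes "S \<subseteq> carrier G" "u \<in> words_len G (inv_set G S) k"
  shows "inv u \<in> words_len G S k"
proof -
  have "inv (word_prod G xs) \<in> words_len G S (length xs)" if "set xs \<subseteq> inv_set G S" for xs
    using that
  proof (induction xs)
    case Nil
    then show ?case using one_in_words_len_0 by (simp add: word_prod_def)
  next
    case (Cons x xs)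
    obtain s where s: "s \<in> S" "x = inv s" using Cons.prems unfolding inv_set_def by auto
    have "set xs \<subseteq> carrier G" using Cons.prems assms(1) unfolding inv_set_def by auto
    then have "word_prod G xs \<in> carrier G" by (rule word_prod_closed)
    then have "inv (word_prod G (x # xs)) = inv (word_prod G xs) \<otimes> s"
      using s assms(1) by (auto simp: word_prod_def inv_mult_group)
    with words_len_mult[OF assms(1) Cons.IH words_len_singleton] Cons.prems s assms(1)
    show ?case by auto
  qed
  with assms(2) show ?thesis unfolding words_len_def by blast
qed

lemma inv_in_words_len_with_unit:
  assumes "S \<subseteq> carrier G" "subgroup (W G S) G" "s \<in> S"
  shows "\<exists>p. inv s \<in> words_len G S p \<and> \<one> \<in> words_len G S (Suc p)"
proof -
  have s: "s \<in> words_len G S 1" using assms(1,3) by (rule words_len_singleton)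
  then have "inv s \<in> W G S" using subgroup.m_inv_closed[OF assms(2)] unfolding W_def by blast
  then obtain p where p: "inv s \<in> words_len G S p" unfolding W_def by blast
  moreover have "s \<otimes> inv s = \<one>" using assms(1,3) by auto
  ultimately show ?thesis using words_len_mult[OF assms(1) s p] by auto
qed

lemma two_sided_walk:
  assumes "L \<subseteq> carrier G" "R \<subseteq> carrier G" "x \<in> carrier G"
    and "wl \<in> words_len G L k" "wr \<in> words_len G R k"
  shows "(x, inv wl \<otimes> x \<otimes> wr) \<in> (two_sided_arcs G L R)\<^sup>*"
proof -
  have "(x, inv (word_prod G ls) \<otimes> x \<otimes> word_prod G rs) \<in> (two_sided_arcs G L R)\<^sup>*"
    if "x \<in> carrier G" "set ls \<subseteq> L" "set rs \<subseteq> R" "length ls = length rs" for x ls rs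
    using that
  proof (induction ls arbitrary: rs x)
    case Nil
    then show ?case by (simp add: word_prod_def)
  next
    case (Cons l ls)
    then obtain r rs' where rs: "rs = r # rs'" by (cases rs) auto
    have lr: "l \<in> carrier G" "r \<in> carrier G" using Cons.prems rs assms(1,2) by auto
    let ?y = "inv l \<otimes> x \<otimes> r"
    have "(x, ?y) \<in> two_sided_arcs G L R"
      unfolding two_sided_arcs_def using Cons.prems rs lr by auto
    moreover have "(?y, inv (word_prod G ls) \<otimes> ?y \<otimes> word_prod G rs') \<in> (two_sided_arcs G L R)\<^sup>*"
      using Cons.IH[of ?y rs'] Cons.prems rs lr by auto
    moreover have "set ls \<subseteq> carrier G" "set rs' \<subseteq> carrier G"
      using Cons.prems rs assms(1,2) by auto
    then have "inv (word_prod G ls) \<otimes> ?y \<otimes> word_prod G rs' =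
        inv (word_prod G (l # ls)) \<otimes> x \<otimes> word_prod G rs"
      using lr Cons.prems rs
      by (simp add: word_prod_def inv_mult_group m_assoc word_prod_closed[unfolded word_prod_def])
    ultimately show ?case by (metis converse_rtrancl_into_rtrancl)
  qed
  with assms show ?thesis unfolding words_len_def by auto
qed

lemma two_sided_arc_reverse:
  assumes "L \<subseteq> carrier G" "R \<subseteq> carrier G" "subgroup (W G L) G" "subgroup (W G R) G"
    and "(x, y) \<in> two_sided_arcs G L R"
  shows "(y, x) \<in> (two_sided_arcs G L R)\<^sup>*"
proof -
  obtain l r where x: "x \<in> carrier G" and lr: "l \<in> L" "r \<in> R" and y: "y = inv l \<otimes> x \<otimes> r"
    using assms(5) unfolding two_sided_arcs_def by auto
  have lrc: "l \<in> carrier G" "r \<in> carrier G" using lr assms(1,2) by auto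
  obtain p where p: "inv l \<in> words_len G L p" "\<one> \<in> words_len G L (Suc p)"
    using inv_in_words_len_with_unit[OF assms(1,3) lr(1)] by blast
  obtain q where q: "inv r \<in> words_len G R q" "\<one> \<in> words_len G R (Suc q)"
    using inv_in_words_len_with_unit[OF assms(2,4) lr(2)] by blast
  \<comment> \<open>both lengths are padded to \<open>p + q + p q\<close>\<close>
  have "inv l \<in> words_len G L (p + q * Suc p)"
    using words_len_pad[OF assms(1) p] by blast
  moreover have "inv r \<in> words_len G R (p + q * Suc p)"
    using words_len_pad[OF assms(2) q, of p] by (simp add: algebra_simps)
  moreover have "y \<in> carrier G" using x y lrc by simp
  ultimately have "(y, inv (inv l) \<otimes> y \<otimes> inv r) \<in> (two_sided_arcs G L R)\<^sup>*"
    using two_sided_walk[OF assms(1,2)] by blast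
  moreover have "inv (inv l) \<otimes> y \<otimes> inv r = x"
    using x y lrc by (simp add: m_assoc flip: m_assoc[of l "inv l"])
  ultimately show ?thesis by simp
qed

lemma sym_two_sided_reach:
  assumes "L \<subseteq> carrier G" "R \<subseteq> carrier G" "subgroup (W G L) G" "subgroup (W G R) G"
  shows "sym ((two_sided_arcs G L R)\<^sup>*)"
proof (rule symI)
  fix x y assume "(x, y) \<in> (two_sided_arcs G L R)\<^sup>*"
  then show "(y, x) \<in> (two_sided_arcs G L R)\<^sup>*"
    by induction (auto intro: rtrancl_trans two_sided_arc_reverse[OF assms])
qed

lemma reach_from_L_power:
  assumes "L \<subseteq> carrier G" "R \<subseteq> carrier G" "l \<in> L" "r \<in> R"
    and "w \<in> words_len G L a" "v \<in> words_len G R (k + a)"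
  shows "(l [^] k, inv w \<otimes> v) \<in> (two_sided_arcs G L R)\<^sup>*"
    and "(l [^] k, r [^] k) \<in> (two_sided_arcs G L R)\<^sup>*"
proof -
  have c: "l \<in> carrier G" "w \<in> carrier G" "v \<in> carrier G"
    using assms words_len_closed by auto
  have "l [^] k \<otimes> w \<in> words_len G L (k + a)"
    using words_len_mult[OF assms(1) nat_pow_in_words_len[OF assms(1,3)] assms(5)] .
  with two_sided_walk[OF assms(1,2) _ _ assms(6), of "l [^] k"]
  have "(l [^] k, inv (l [^] k \<otimes> w) \<otimes> l [^] k \<otimes> v) \<in> (two_sided_arcs G L R)\<^sup>*"
    using c by simp
  moreover have "inv (l [^] k \<otimes> w) \<otimes> l [^] k \<otimes> v = inv w \<otimes> v"
    using c by (simp add: inv_mult_group m_assoc)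
  ultimately show "(l [^] k, inv w \<otimes> v) \<in> (two_sided_arcs G L R)\<^sup>*" by simp
  from two_sided_walk[OF assms(1,2) _ nat_pow_in_words_len[OF assms(1,3)]
      nat_pow_in_words_len[OF assms(2,4)], of "l [^] k" k]
  show "(l [^] k, r [^] k) \<in> (two_sided_arcs G L R)\<^sup>*"
    using c assms(2,4) by auto
qed

lemma reach_from_inv_R_power:
  assumes "L \<subseteq> carrier G" "R \<subseteq> carrier G" "l \<in> L" "r \<in> R"
    and "w \<in> words_len G L (k + n)" "v \<in> words_len G R n"
  shows "(inv (r [^] k), inv w \<otimes> v) \<in> (two_sided_arcs G L R)\<^sup>*"
    and "(inv (r [^] k), inv (l [^] k)) \<in> (two_sided_arcs G L R)\<^sup>*"
proof -
  have c: "r \<in> carrier G" "l \<in> carrier G" "w \<in> carrier G" "v \<in> carrier G"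
    using assms words_len_closed by auto
  have "r [^] k \<otimes> v \<in> words_len G R (k + n)"
    using words_len_mult[OF assms(2) nat_pow_in_words_len[OF assms(2,4)] assms(6)] .
  with two_sided_walk[OF assms(1,2) _ assms(5), of "inv (r [^] k)"]
  have "(inv (r [^] k), inv w \<otimes> inv (r [^] k) \<otimes> (r [^] k \<otimes> v)) \<in> (two_sided_arcs G L R)\<^sup>*"
    using c by simp
  moreover have "inv w \<otimes> inv (r [^] k) \<otimes> (r [^] k \<otimes> v) = inv w \<otimes> v"
    using c by (simp add: m_assoc flip: m_assoc[of "inv (r [^] k)" "r [^] k"])
  ultimately show "(inv (r [^] k), inv w \<otimes> v) \<in> (two_sided_arcs G L R)\<^sup>*" by simp
  from two_sided_walk[OF assms(1,2) _ nat_pow_in_words_len[OF assms(1,3)]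
      nat_pow_in_words_len[OF assms(2,4)], of "inv (r [^] k)" k]
  show "(inv (r [^] k), inv (l [^] k)) \<in> (two_sided_arcs G L R)\<^sup>*"
    using c by (simp add: m_assoc)
qed

lemma reach_from_int_power:
  assumes "L \<subseteq> carrier G" "R \<subseteq> carrier G" "l \<in> L" "r \<in> R"
    and "w \<in> words_len G L a" "v \<in> words_len G R n"
  shows "\<exists>x y. {x, y} = {l [^] (int n - int a), r [^] (int n - int a)} \<and>
    (x, inv w \<otimes> v) \<in> (two_sided_arcs G L R)\<^sup>* \<and> (x, y) \<in> (two_sided_arcs G L R)\<^sup>*"
proof (cases "a \<le> n")
  case True
  define k where "k = n - a"
  have "int n - int a = int k" "v \<in> words_len G R (k + a)"
    using True assms(6) k_def by auto
  with reach_from_L_power[OF assms(1-5)] show ?thesis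
    by (intro exI[of _ "l [^] k"] exI[of _ "r [^] k"]) (simp add: int_pow_int)
next
  case False
  define k where "k = a - n"
  have "int n - int a = - int k" "w \<in> words_len G L (k + n)"
    using False assms(5) k_def by auto
  moreover have "l \<in> carrier G" "r \<in> carrier G" using assms(1-4) by auto
  ultimately show ?thesis using reach_from_inv_R_power[OF assms(1-4) _ assms(6)]
    by (intro exI[of _ "inv (r [^] k)"] exI[of _ "inv (l [^] k)"]) (auto simp: int_pow_neg_int)
qed

end

theorem mainTheorem7:
  fixes G (structure)
    and L R :: "'a set" and g :: 'a and a n :: nat and u v :: 'a
  assumes "group G"
    and "L \<subseteq> carrier G" and "L \<noteq> {}"
    and "R \<subseteq> carrier G" and "R \<noteq> {}"
    and "subgroup (W G L) G" and "subgroup (W G R) G"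
    and "u \<in> words_len G (inv_set G L) a"
    and "v \<in> words_len G R n"
    and "g = u \<otimes> v"
  shows "\<forall>l\<in>L. \<forall>r\<in>R.
           strongly_connected G L R g (l [^] (int n - int a)) \<and>
           strongly_connected G L R g (r [^] (int n - int a))"
proof (intro ballI)
  fix l r assume lr: "l \<in> L" "r \<in> R"
  interpret group G by (rule assms(1))
  have sym: "sym ((two_sided_arcs G L R)\<^sup>*)"
    using sym_two_sided_reach[OF assms(2,4,6,7)] .
  have "inv_set G L \<subseteq> carrier G" using assms(2) unfolding inv_set_def by auto
  then have "u \<in> carrier G" using assms(8) by (rule words_len_closed)
  then have "g = inv (inv u) \<otimes> v" using assms(10) by simp
  moreover have "inv u \<in> words_len G L a"
    using inv_in_words_len_of_inv_set[OF assms(2,8)] .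
  ultimately obtain x y where "{x, y} = {l [^] (int n - int a), r [^] (int n - int a)}"
    and "(x, g) \<in> (two_sided_arcs G L R)\<^sup>*" "(x, y) \<in> (two_sided_arcs G L R)\<^sup>*"
    using reach_from_int_power[OF assms(2,4) lr _ assms(9)] by metis
  with sym show "strongly_connected G L R g (l [^] (int n - int a)) \<and>
      strongly_connected G L R g (r [^] (int n - int a))"
    unfolding strongly_connected_iff_reach[OF sym] sym_def
    by (auto simp: doubleton_eq_iff intro: rtrancl_trans)
qed

end
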